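(* Let $G=(V,E)$ be a finite simple strongly connected directed graph with a fixed total order on $V$. For every $v\in V$, there is exactly one spanning tree $\mathbf a$ of $G$ rooted at $v$ with $\psi(\mathbf a)=V$; that is, $m(V,v)=1$.
   Context: A spanning tree of $G$ is a subgraph on all vertices with no cycle, one vertex (root) of outdegree $0$ and all others of outdegree $1$. Exploration algorithm (depends on the fixed total order of $V$). Input: a spanning tree $\mathbf a$ rooted at $v$. Initialize $A=\{v\}$, $F=\{e: s(e)\neq v\}$, $\mathbf L$ = FIFO list of edges with target $v$, by increasing source. While $\mathbf L$ is nonempty, take its first edge $e$, with source $w$: if $e\in\mathbf a$, add $w$ to $A$, delete from $\mathbf L$ (and $F$) all edges with source $w$, and append to $\mathbf L$ all edges of $F$ with target $w$ by increasing source; otherwise delete from $\mathbf L$ and $F$ all edges with source or target $w$. At the end $\phi(\mathbf a)=A$ and $\psi(\mathbf a)$ is the strongly connected component of $v$ in the induced graph $G_{\phi(\mathbf a)}$. For $W$ strongly connected and $w\in W$, $m(W,w)$ is the number of spanning trees rooted at $w$ with $\psi(\mathbf a)=W$. *)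

theory Defs
  imports Main
begin

text \<open>Directed graphs: vertex set V (finite), edge set E of pairs (source, target).
  The fixed total order on V is the linorder of the vertex type.\<close>

definition simple_digraph :: "'v set \<Rightarrow> ('v \<times> 'v) set \<Rightarrow> bool" where
  "simple_digraph V E \<longleftrightarrow> finite V \<and> E \<subseteq> V \<times> V \<and> (\<forall>x. (x, x) \<notin> E)"

definition strongly_connected :: "'v set \<Rightarrow> ('v \<times> 'v) set \<Rightarrow> bool" where
  "strongly_connected V E \<longleftrightarrow> (\<forall>x\<in>V. \<forall>y\<in>V. (x, y) \<in> E\<^sup>*)"

definition spanning_tree :: "'v set \<Rightarrow> ('v \<times> 'v) set \<Rightarrow> 'v \<Rightarrow> ('v \<times> 'v) set \<Rightarrow> bool" where
  "spanning_tree V E v a \<longleftrightarrow> v \<in> V \<and> a \<subseteq> E \<and> acyclic a \<and>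
     card {e \<in> a. fst e = v} = 0 \<and>
     (\<forall>u\<in>V - {v}. card {e \<in> a. fst e = u} = 1)"

definition explore_step :: "('v::linorder \<times> 'v) set \<Rightarrow>
    'v set \<times> ('v \<times> 'v) set \<times> ('v \<times> 'v) list \<Rightarrow> 'v set \<times> ('v \<times> 'v) set \<times> ('v \<times> 'v) list" where
  "explore_step a S = (case S of (A, F, L) \<Rightarrow>
     (case L of [] \<Rightarrow> (A, F, L)
      | e # _ \<Rightarrow> (let w = fst e in
          if e \<in> a then
            (let F' = {f \<in> F. fst f \<noteq> w} in
              (insert w A, F',
               filter (\<lambda>f. fst f \<noteq> w) L @
                 map (\<lambda>u. (u, w)) (sorted_list_of_set {u. (u, w) \<in> F'})))
          else
            (A, {f \<in> F. fst f \<noteq> w \<and> snd f \<noteq> w},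
             filter (\<lambda>f. fst f \<noteq> w \<and> snd f \<noteq> w) L))))"

definition explore_init :: "('v::linorder \<times> 'v) set \<Rightarrow> 'v \<Rightarrow> 'v set \<times> ('v \<times> 'v) set \<times> ('v \<times> 'v) list" where
  "explore_init E v = ({v}, {e \<in> E. fst e \<noteq> v},
      map (\<lambda>u. (u, v)) (sorted_list_of_set {u. (u, v) \<in> E}))"

text \<open>Each edge enters the list L at most once and each step removes the head of L, so
  after card E steps L is empty (explore_step is the identity on an empty list).\<close>
definition phi :: "('v::linorder \<times> 'v) set \<Rightarrow> 'v \<Rightarrow> ('v \<times> 'v) set \<Rightarrow> 'v set" where
  "phi E v a = fst ((explore_step a ^^ card E) (explore_init E v))"

definition scc_of :: "'v set \<Rightarrow> ('v \<times> 'v) set \<Rightarrow> 'v \<Rightarrow> 'v set" where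
  "scc_of A E v = {u \<in> A. (v, u) \<in> (E \<inter> A \<times> A)\<^sup>* \<and> (u, v) \<in> (E \<inter> A \<times> A)\<^sup>*}"

definition psi :: "('v::linorder \<times> 'v) set \<Rightarrow> 'v \<Rightarrow> ('v \<times> 'v) set \<Rightarrow> 'v set" where
  "psi E v a = scc_of (phi E v a) E v"

definition m_count :: "'v::linorder set \<Rightarrow> ('v \<times> 'v) set \<Rightarrow> 'v set \<Rightarrow> 'v \<Rightarrow> nat" where
  "m_count V E W w = card {a. spanning_tree V E w a \<and> psi E w a = W}"

end

theory Submission
  imports Defs
begin

text \<open>Run with \<open>a = E\<close>, the exploration accepts every edge it examines: it is a search from
  \<open>v\<close> against the edge direction, reaches all of \<open>V\<close> by strong connectivity, and the accepted
  edges form a spanning tree \<open>T\<close> with \<open>\<phi>(T) = V\<close>, hence \<open>\<psi>(T) = V\<close>.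
  Conversely, if \<open>\<psi>(a) = V\<close> then \<open>\<phi>(a) = V\<close>, so the exploration of \<open>a\<close> never rejects an edge,
  since rejecting an edge with source \<open>w\<close> removes \<open>w\<close> from the game for good. Hence it runs exactly
  like the exploration of \<open>E\<close>, so \<open>T \<subseteq> a\<close>, and two spanning trees rooted at \<open>v\<close>, one inside the
  other, coincide.\<close>

lemma finite_edges: "simple_digraph V E \<Longrightarrow> finite E"
  unfolding simple_digraph_def by (meson finite_SigmaI finite_subset)

lemma finite_sources_into: "finite F \<Longrightarrow> finite {u. (u, w) \<in> F \<and> P u}"
  by (rule finite_subset[of _ "fst ` F"]) force+

lemma rtrancl_enters_set:
  assumes "(u, y) \<in> E\<^sup>*" and "u \<notin> A" and "y \<in> A"
  shows "\<exists>p q. (p, q) \<in> E \<and> p \<notin> A \<and> q \<in> A"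
  using assms
proof (induction rule: rtrancl_induct)
  case (step y z)
  then show ?case by (cases "y \<in> A") auto
qed simp

lemma strongly_connected_closed_set:
  assumes "strongly_connected V E" and "v \<in> A" and "A \<subseteq> V"
    and closed: "\<forall>(p, q) \<in> E. q \<in> A \<longrightarrow> p \<in> A"
  shows "A = V"
proof (rule ccontr)
  assume "A \<noteq> V"
  then obtain u where "u \<in> V" and "u \<notin> A" using \<open>A \<subseteq> V\<close> by blast
  moreover have "(u, v) \<in> E\<^sup>*" using assms \<open>u \<in> V\<close> by (auto simp: strongly_connected_def)
  ultimately show False using rtrancl_enters_set[of u v E A] \<open>v \<in> A\<close> closed by blast
qed

lemma acyclic_insert_fresh_source:
  assumes "acyclic T" and "w \<notin> snd ` T" and "w \<noteq> x"
  shows "acyclic (insert (w, x) T)"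
proof -
  have "(x, w) \<notin> T\<^sup>*"
  proof
    assume "(x, w) \<in> T\<^sup>*"
    then show False
      by (cases rule: rtranclE) (use assms in force)+
  qed
  then show ?thesis using assms(1) by simp
qed

lemma spanning_treeI_bij_betw:
  assumes "v \<in> V" and "T \<subseteq> E" and "acyclic T" and bij: "bij_betw fst T (V - {v})"
  shows "spanning_tree V E v T"
proof -
  have "v \<notin> fst ` T" using bij by (simp add: bij_betw_def)
  then have "{e \<in> T. fst e = v} = {}" by force
  then have "card {e \<in> T. fst e = v} = 0" by (metis card.empty)
  moreover have "card {e \<in> T. fst e = u} = 1" if u: "u \<in> V - {v}" for u
  proof -
    have "u \<in> fst ` T" using bij u by (simp add: bij_betw_def)
    then obtain e where "e \<in> T" and "fst e = u" by blast
    then have "{e' \<in> T. fst e' = u} = {e}"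
      using bij by (auto simp: bij_betw_def inj_on_def)
    then show ?thesis by simp
  qed
  ultimately show ?thesis using assms unfolding spanning_tree_def by blast
qed

lemma spanning_tree_subset_eq:
  assumes sd: "simple_digraph V E"
    and a: "spanning_tree V E v a" and b: "spanning_tree V E v b" and "a \<subseteq> b"
  shows "a = b"
proof
  show "b \<subseteq> a"
  proof
    fix e assume eb: "e \<in> b"
    obtain u y where e: "e = (u, y)" by (cases e)
    have "finite b" using b finite_edges[OF sd] by (auto simp: spanning_tree_def intro: finite_subset)
    then have "{e \<in> b. fst e = v} = {}" using b by (simp add: spanning_tree_def)
    moreover have "u \<in> V" using eb e b sd by (auto simp: spanning_tree_def simple_digraph_def)
    ultimately have u: "u \<in> V - {v}" using eb e by auto
    then have "card {e \<in> a. fst e = u} = 1" and "card {e \<in> b. fst e = u} = 1"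
      using a b by (simp_all add: spanning_tree_def)
    then obtain e' e'' where e': "{e \<in> a. fst e = u} = {e'}" and e'': "{e \<in> b. fst e = u} = {e''}"
      by (meson card_1_singletonE)
    have "e' \<in> {e \<in> b. fst e = u}" using e' \<open>a \<subseteq> b\<close> by auto
    moreover have "e \<in> {e \<in> b. fst e = u}" using eb e by simp
    ultimately have "e = e'" using e'' by simp
    then show "e \<in> a" using e' by blast
  qed
qed fact

lemma scc_of_strongly_connected:
  assumes "strongly_connected V E" and "E \<subseteq> V \<times> V" and "v \<in> V"
  shows "scc_of V E v = V"
proof -
  have "E \<inter> V \<times> V = E" using assms(2) by blast
  then show ?thesis using assms unfolding scc_of_def strongly_connected_def by auto
qed

lemma explore_step_Nil [simp]: "explore_step a (A, F, []) = (A, F, [])"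
  by (simp add: explore_step_def)

lemma explore_step_accept:
  assumes "h \<in> a"
  shows "explore_step a (A, F, h # L) =
    (insert (fst h) A, {f \<in> F. fst f \<noteq> fst h},
     filter (\<lambda>f. fst f \<noteq> fst h) L @
       map (\<lambda>u. (u, fst h)) (sorted_list_of_set {u. (u, fst h) \<in> F \<and> u \<noteq> fst h}))"
  using assms by (simp add: explore_step_def Let_def)

lemma explore_step_reject:
  assumes "h \<notin> a"
  shows "explore_step a (A, F, h # L) =
    (A, {f \<in> F. fst f \<noteq> fst h \<and> snd f \<noteq> fst h}, filter (\<lambda>f. fst f \<noteq> fst h \<and> snd f \<noteq> fst h) L)"
  using assms by (simp add: explore_step_def Let_def)

lemma explore_step_cong:
  assumes "L \<noteq> [] \<Longrightarrow> hd L \<in> a \<longleftrightarrow> hd L \<in> b"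
  shows "explore_step a (A, F, L) = explore_step b (A, F, L)"
  using assms by (cases L) (simp_all add: explore_step_def)

definition explore_run ::
    "('v::linorder \<times> 'v) set \<Rightarrow> ('v \<times> 'v) set \<Rightarrow> 'v \<Rightarrow> nat \<Rightarrow> 'v set \<times> ('v \<times> 'v) set \<times> ('v \<times> 'v) list"
  where "explore_run a E v n = (explore_step a ^^ n) (explore_init E v)"

lemma explore_run_0 [simp]: "explore_run a E v 0 = explore_init E v"
  by (simp add: explore_run_def)

lemma explore_run_Suc [simp]: "explore_run a E v (Suc n) = explore_step a (explore_run a E v n)"
  by (simp add: explore_run_def)

lemma phi_eq_explore_run: "phi E v a = fst (explore_run a E v (card E))"
  by (simp add: phi_def explore_run_def)

lemma explore_run_queue_subset:
  assumes sd: "simple_digraph V E" and run: "explore_run a E v n = (A, F, L)"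
  shows "set L \<subseteq> F \<and> F \<subseteq> E"
  using run
proof (induction n arbitrary: A F L)
  case 0
  have "finite {u. (u, v) \<in> E}"
    using finite_sources_into[OF finite_edges[OF sd], where P = "\<lambda>_. True"] by simp
  then show ?case using 0 sd by (auto simp: explore_init_def simple_digraph_def)
next
  case (Suc n)
  obtain A0 F0 L0 where run0: "explore_run a E v n = (A0, F0, L0)" by (cases "explore_run a E v n")
  then have IH: "set L0 \<subseteq> F0" "F0 \<subseteq> E" using Suc.IH by auto
  show ?case
  proof (cases L0)
    case (Cons h L1)
    then show ?thesis
      using Suc.prems run0 IH finite_sources_into[OF finite_subset[OF IH(2) finite_edges[OF sd]]]
      by (cases "h \<in> a") (auto simp: explore_step_accept explore_step_reject)
  qed (use Suc.prems run0 IH in auto)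
qed

text \<open>The queue only ever holds edges of \<open>E\<close>, so \<open>explore_run E E v\<close> accepts every edge it
  examines; \<open>greedy_heads E v n\<close> collects the edges accepted in its first \<open>n\<close> steps.\<close>

definition greedy_heads :: "('v::linorder \<times> 'v) set \<Rightarrow> 'v \<Rightarrow> nat \<Rightarrow> ('v \<times> 'v) set" where
  "greedy_heads E v n =
     {hd (snd (snd (explore_run E E v k))) | k. k < n \<and> snd (snd (explore_run E E v k)) \<noteq> []}"

lemma greedy_heads_Suc:
  "greedy_heads E v (Suc n) =
     (case snd (snd (explore_run E E v n)) of [] \<Rightarrow> greedy_heads E v n | h # _ \<Rightarrow> insert h (greedy_heads E v n))"
  by (auto simp: greedy_heads_def less_Suc_eq split: list.split) force

definition greedy_invariant ::
    "'v set \<Rightarrow> ('v \<times> 'v) set \<Rightarrow> 'v \<Rightarrow> 'v set \<Rightarrow> ('v \<times> 'v) set \<Rightarrow> ('v \<times> 'v) list \<Rightarrow> ('v \<times> 'v) set \<Rightarrow> bool"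
  where "greedy_invariant V E v A F L T \<longleftrightarrow>
    v \<in> A \<and> A \<subseteq> V \<and> F = {e \<in> E. fst e \<notin> A} \<and> set L = {e \<in> E. snd e \<in> A \<and> fst e \<notin> A} \<and>
    T \<subseteq> E \<and> acyclic T \<and> bij_betw fst T (A - {v}) \<and> snd ` T \<subseteq> A"

lemma greedy_invariant_init:
  assumes sd: "simple_digraph V E" and "v \<in> V"
  shows "greedy_invariant V E v {v} {e \<in> E. fst e \<noteq> v}
           (map (\<lambda>u. (u, v)) (sorted_list_of_set {u. (u, v) \<in> E})) {}"
  using assms finite_sources_into[OF finite_edges[OF sd], where P = "\<lambda>_. True"]
  by (auto simp: greedy_invariant_def simple_digraph_def acyclic_def bij_betw_def)

lemma set_queue_after_accept:
  assumes "finite F" and F: "F = {e \<in> E. fst e \<notin> A}"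
    and L: "set (h # L) = {e \<in> E. snd e \<in> A \<and> fst e \<notin> A}" and "fst h = w"
  shows "set (filter (\<lambda>f. fst f \<noteq> w) L @
      map (\<lambda>u. (u, w)) (sorted_list_of_set {u. (u, w) \<in> F \<and> u \<noteq> w}))
      = {e \<in> E. snd e \<in> insert w A \<and> fst e \<notin> insert w A}"
proof -
  have "set (filter (\<lambda>f. fst f \<noteq> w) L) = {e \<in> E. snd e \<in> A \<and> fst e \<notin> insert w A}"
    using L \<open>fst h = w\<close> by auto
  moreover have "set (map (\<lambda>u. (u, w)) (sorted_list_of_set {u. (u, w) \<in> F \<and> u \<noteq> w}))
      = {e \<in> E. snd e = w \<and> fst e \<notin> insert w A}"
    using F finite_sources_into[OF \<open>finite F\<close>, of w "\<lambda>u. u \<noteq> w"] by auto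
  ultimately show ?thesis by auto
qed

lemma greedy_invariant_step:
  assumes sd: "simple_digraph V E" and inv: "greedy_invariant V E v A F (h # L) T"
  shows "fst h \<notin> A"
    and "\<exists>F' L'. explore_step E (A, F, h # L) = (insert (fst h) A, F', L') \<and>
           greedy_invariant V E v (insert (fst h) A) F' L' (insert h T)"
proof -
  obtain w x where h: "h = (w, x)" by (cases h)
  have "h \<in> {e \<in> E. snd e \<in> A \<and> fst e \<notin> A}"
    using inv unfolding greedy_invariant_def by (metis list.set_intros(1))
  then have hE: "h \<in> E" and xA: "x \<in> A" and wA: "w \<notin> A" using h by auto
  then show "fst h \<notin> A" using h by simp
  have vA: "v \<in> A" and TA: "bij_betw fst T (A - {v})" "snd ` T \<subseteq> A"
    using inv by (auto simp: greedy_invariant_def)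
  have "w \<notin> fst ` T" using TA wA by (auto simp: bij_betw_def)
  then have "h \<notin> T" using h by force
  moreover have "insert w A - {v} = insert w (A - {v})" using wA vA by auto
  ultimately have bij: "bij_betw fst (insert h T) (insert w A - {v})"
    using notIn_Un_bij_betw[OF _ _ TA(1), of h] wA h by simp
  have acyc: "acyclic (insert h T)"
    using acyclic_insert_fresh_source[of T w x] inv TA(2) wA xA h by (auto simp: greedy_invariant_def)
  have F: "F = {e \<in> E. fst e \<notin> A}" and L: "set (h # L) = {e \<in> E. snd e \<in> A \<and> fst e \<notin> A}"
    using inv by (simp_all add: greedy_invariant_def)
  have "finite F" using F finite_edges[OF sd] by simp
  then have L': "set (filter (\<lambda>f. fst f \<noteq> w) L @
      map (\<lambda>u. (u, w)) (sorted_list_of_set {u. (u, w) \<in> F \<and> u \<noteq> w}))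
      = {e \<in> E. snd e \<in> insert w A \<and> fst e \<notin> insert w A}"
    using set_queue_after_accept[OF _ F L] h by simp
  have "{f \<in> F. fst f \<noteq> w} = {e \<in> E. fst e \<notin> insert w A}" using F by auto
  moreover have "insert w A \<subseteq> V" and "insert h T \<subseteq> E" and "snd ` insert h T \<subseteq> insert w A"
    using inv hE xA h sd TA(2) by (auto simp: greedy_invariant_def simple_digraph_def)
  ultimately show "\<exists>F' L'. explore_step E (A, F, h # L) = (insert (fst h) A, F', L') \<and>
           greedy_invariant V E v (insert (fst h) A) F' L' (insert h T)"
    using vA bij acyc L' h unfolding explore_step_accept[OF hE] greedy_invariant_def by simp
qed

lemma greedy_run_invariant:
  assumes sd: "simple_digraph V E" and vV: "v \<in> V" and run: "explore_run E E v n = (A, F, L)"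
  shows "greedy_invariant V E v A F L (greedy_heads E v n) \<and> (L = [] \<or> card A = Suc n)"
  using run
proof (induction n arbitrary: A F L)
  case 0
  then show ?case
    using greedy_invariant_init[OF sd vV] by (auto simp: explore_init_def greedy_heads_def)
next
  case (Suc n)
  obtain A0 F0 L0 where run0: "explore_run E E v n = (A0, F0, L0)" by (cases "explore_run E E v n")
  with Suc.IH have inv: "greedy_invariant V E v A0 F0 L0 (greedy_heads E v n)"
    and card: "L0 = [] \<or> card A0 = Suc n" by auto
  show ?case
  proof (cases L0)
    case Nil
    then show ?thesis using Suc.prems run0 inv by (simp add: greedy_heads_Suc)
  next
    case (Cons h L1)
    obtain F' L' where step: "explore_step E (A0, F0, h # L1) = (insert (fst h) A0, F', L')"
      and inv': "greedy_invariant V E v (insert (fst h) A0) F' L' (insert h (greedy_heads E v n))"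
      using greedy_invariant_step(2)[OF sd inv[unfolded Cons]] by blast
    have "fst h \<notin> A0" using greedy_invariant_step(1)[OF sd inv[unfolded Cons]] .
    moreover have "finite A0"
      using inv sd by (auto simp: greedy_invariant_def simple_digraph_def intro: finite_subset)
    ultimately have "card (insert (fst h) A0) = Suc (Suc n)" using card Cons by simp
    moreover have "(A, F, L) = (insert (fst h) A0, F', L')" using Suc.prems run0 Cons step by simp
    ultimately show ?thesis using inv' run0 Cons by (simp add: greedy_heads_Suc)
  qed
qed

lemma greedy_run_final:
  assumes sd: "simple_digraph V E" and sc: "strongly_connected V E" and vV: "v \<in> V"
    and run: "explore_run E E v (card E) = (A, F, L)"
  shows "L = [] \<and> A = V"
proof -
  define T where "T = greedy_heads E v (card E)"
  have inv: "greedy_invariant V E v A F L T" and card: "L = [] \<or> card A = Suc (card E)"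
    using greedy_run_invariant[OF sd vV run] by (simp_all add: T_def)
  have vA: "v \<in> A" and AV: "A \<subseteq> V" and L: "set L = {e \<in> E. snd e \<in> A \<and> fst e \<notin> A}"
    and TE: "T \<subseteq> E" and T: "bij_betw fst T (A - {v})"
    using inv by (simp_all add: greedy_invariant_def)
  have L_Nil: "L = []"
    \<comment> \<open>otherwise all \<open>card E\<close> steps accepted an edge, so every edge, including the head, is in \<open>T\<close>\<close>
  proof (rule ccontr)
    assume "L \<noteq> []"
    then obtain h where h: "h \<in> set L" by (cases L) auto
    have "finite A" using AV sd by (auto simp: simple_digraph_def intro: finite_subset)
    then have "card T = card E"
      using bij_betw_same_card[OF T] card vA \<open>L \<noteq> []\<close> by simp
    then have "T = E" using TE finite_edges[OF sd] by (simp add: card_subset_eq)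
    moreover have "h \<in> E" and "fst h \<notin> A" using h L by simp_all
    ultimately have "fst h \<in> fst ` T" by simp
    then show False using \<open>fst h \<notin> A\<close> T by (simp add: bij_betw_def)
  qed
  moreover have "\<forall>(p, q) \<in> E. q \<in> A \<longrightarrow> p \<in> A" using L L_Nil by auto
  ultimately show ?thesis using strongly_connected_closed_set[OF sc vA AV] by blast
qed

lemma greedy_tree_spanning:
  assumes sd: "simple_digraph V E" and sc: "strongly_connected V E" and vV: "v \<in> V"
  shows "spanning_tree V E v (greedy_heads E v (card E))"
proof -
  obtain A F L where run: "explore_run E E v (card E) = (A, F, L)" by (cases "explore_run E E v (card E)")
  then have "A = V" using greedy_run_final[OF assms] by simp
  then show ?thesis
    using greedy_run_invariant[OF sd vV run] vV
    by (auto simp: greedy_invariant_def intro: spanning_treeI_bij_betw)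
qed

lemma explore_run_eq_greedy:
  assumes sd: "simple_digraph V E" and heads: "greedy_heads E v n \<subseteq> a"
  shows "explore_run a E v n = explore_run E E v n"
  using heads
proof (induction n)
  case (Suc n)
  have "greedy_heads E v n \<subseteq> greedy_heads E v (Suc n)" by (auto simp: greedy_heads_def)
  with Suc have IH: "explore_run a E v n = explore_run E E v n" by blast
  obtain A F L where run: "explore_run E E v n = (A, F, L)" by (cases "explore_run E E v n")
  have "hd L \<in> a \<and> hd L \<in> E" if "L \<noteq> []"
  proof
    show "hd L \<in> a" using Suc.prems run that by (force simp: greedy_heads_def)
    show "hd L \<in> E" using explore_run_queue_subset[OF sd run] hd_in_set[OF that] by blast
  qed
  then show ?case using IH run explore_step_cong[of L a E A F] by simp
qed simp

lemma psi_greedy_tree: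
  assumes sd: "simple_digraph V E" and sc: "strongly_connected V E" and vV: "v \<in> V"
  shows "psi E v (greedy_heads E v (card E)) = V"
proof -
  obtain A F L where run: "explore_run E E v (card E) = (A, F, L)" by (cases "explore_run E E v (card E)")
  have "phi E v (greedy_heads E v (card E)) = A"
    using explore_run_eq_greedy[OF sd subset_refl] run by (simp add: phi_eq_explore_run)
  also have "A = V" using greedy_run_final[OF assms run] by simp
  finally show ?thesis
    using scc_of_strongly_connected[OF sc _ vV] sd by (simp add: psi_def simple_digraph_def)
qed

lemma explore_step_keeps_discarded:
  assumes "set L \<subseteq> F" and "w \<notin> A" and "w \<notin> fst ` F"
  shows "w \<notin> fst (explore_step a (A, F, L)) \<and> w \<notin> fst ` fst (snd (explore_step a (A, F, L)))"
proof (cases L)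
  case (Cons h L1)
  then have "fst h \<noteq> w" using assms by force
  then show ?thesis
    using assms Cons by (cases "h \<in> a") (auto simp: explore_step_accept explore_step_reject)
qed (use assms in simp)

lemma explore_run_keeps_discarded:
  assumes sd: "simple_digraph V E" and run: "explore_run a E v m = (A, F, L)"
    and "w \<notin> A" and "w \<notin> fst ` F" and "m \<le> n"
  shows "w \<notin> fst (explore_run a E v n)"
proof -
  have "w \<notin> fst (explore_run a E v n) \<and> w \<notin> fst ` fst (snd (explore_run a E v n))"
    using \<open>m \<le> n\<close>
  proof (induction n rule: dec_induct)
    case base then show ?case using assms run by simp
  next
    case (step n)
    obtain A' F' L' where run': "explore_run a E v n = (A', F', L')"
      by (cases "explore_run a E v n")
    then show ?case
      using step.IH explore_step_keeps_discarded[of L' F' w A' a] explore_run_queue_subset[OF sd run']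
      by simp
  qed
  then show ?thesis ..
qed

lemma greedy_heads_subset_tree:
  assumes sd: "simple_digraph V E" and vV: "v \<in> V" and explored: "V \<subseteq> phi E v a"
  shows "greedy_heads E v (card E) \<subseteq> a"
proof (rule ccontr)
  define rejected where "rejected k \<longleftrightarrow> k < card E \<and> snd (snd (explore_run E E v k)) \<noteq> [] \<and>
      hd (snd (snd (explore_run E E v k))) \<notin> a" for k
  assume "\<not> greedy_heads E v (card E) \<subseteq> a"
  then have "\<exists>k. rejected k" by (auto simp: greedy_heads_def rejected_def)
  then obtain k where k: "rejected k" and "\<forall>j<k. \<not> rejected j"
    by (auto simp: exists_least_iff[of rejected])
  then have "greedy_heads E v k \<subseteq> a" by (auto simp: greedy_heads_def rejected_def)
  then have same: "explore_run a E v k = explore_run E E v k" by (rule explore_run_eq_greedy[OF sd])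
  obtain A F h L where run: "explore_run E E v k = (A, F, h # L)" and ha: "h \<notin> a"
    using k unfolding rejected_def by (metis list.collapse prod.collapse)
  have hE: "h \<in> E" using explore_run_queue_subset[OF sd run] by auto
  have "fst h \<notin> A"
    using greedy_run_invariant[OF sd vV run] greedy_invariant_step(1)[OF sd] by blast
  have rejection: "explore_run a E v (Suc k) =
      (A, {f \<in> F. fst f \<noteq> fst h \<and> snd f \<noteq> fst h}, filter (\<lambda>f. fst f \<noteq> fst h \<and> snd f \<noteq> fst h) L)"
    using same run ha by (simp add: explore_step_reject)
  have "fst h \<notin> fst ` {f \<in> F. fst f \<noteq> fst h \<and> snd f \<noteq> fst h}" by auto
  moreover have "Suc k \<le> card E" using k by (simp add: rejected_def)
  ultimately have "fst h \<notin> phi E v a"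
    unfolding phi_eq_explore_run
    using explore_run_keeps_discarded[OF sd rejection \<open>fst h \<notin> A\<close>] by blast
  moreover have "fst h \<in> V" using hE sd by (auto simp: simple_digraph_def)
  ultimately show False using explored by blast
qed

theorem lemma3p1:
  fixes V :: "'v::linorder set" and E :: "('v \<times> 'v) set" and v :: 'v
  assumes "simple_digraph V E" and "strongly_connected V E" and "v \<in> V"
  shows "(\<exists>!a. spanning_tree V E v a \<and> psi E v a = V) \<and> m_count V E V v = 1"
proof -
  define T where "T = greedy_heads E v (card E)"
  have tree: "spanning_tree V E v T" and psi: "psi E v T = V"
    using greedy_tree_spanning[OF assms] psi_greedy_tree[OF assms] by (simp_all add: T_def)
  have unique: "a = T" if a: "spanning_tree V E v a" and psi_a: "psi E v a = V" for a
  proof -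
    have "V \<subseteq> phi E v a" using psi_a by (auto simp: psi_def scc_of_def)
    then have "T \<subseteq> a" unfolding T_def by (rule greedy_heads_subset_tree[OF assms(1,3)])
    then show "a = T" using spanning_tree_subset_eq[OF assms(1) tree a] by simp
  qed
  have "{a. spanning_tree V E v a \<and> psi E v a = V} = {T}" using tree psi unique by blast
  moreover have "\<exists>!a. spanning_tree V E v a \<and> psi E v a = V" using tree psi unique by blast
  ultimately show ?thesis by (simp add: m_count_def)
qed

end
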